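(* Let $S$ be a compact connected surface, with or without boundary, and let $M = S\times\mathbb{R}$ (the trivial line bundle over $S$), assumed orientable. Suppose that a group $G$ acts on $M$ by covering transformations, and that $M$ carries a Riemannian metric for which this action is by isometries. Suppose that $\gamma\in G$ generates an infinite cyclic subgroup $\langle\gamma\rangle\cong\mathbb{Z}$ of $G$. Let $S_0 = S\times\{t_0\}$ be a horizontal section for some $t_0\in\mathbb{R}$, and suppose there is a positive integer $n_0$ such that $\gamma^n S_0\cap S_0=\emptyset$ for all $n>n_0$. Then the quotient $M/G$ is compact.
   Context: An action by covering transformations means a free, properly discontinuous action, i.e. every point has a neighborhood $\mathcal{U}$ with $g\mathcal{U}\cap\mathcal{U}=\emptyset$ for all $g\neq 1$. *)

theory Defs
  imports "HOL-Analysis.Analysis" "HOL-Homology.Homology"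
    "HOL-Algebra.Group_Action" "HOL-Algebra.Generated_Groups"
begin

definition half_space :: "nat \<Rightarrow> (nat \<Rightarrow> real) topology" where
  "half_space n = subtopology (Euclidean_space n) {y. 0 \<le> y 0}"

definition manifold_with_boundary :: "nat \<Rightarrow> 'a topology \<Rightarrow> bool" where
  "manifold_with_boundary n X \<longleftrightarrow>
     Hausdorff_space X \<and> second_countable X \<and>
     (\<forall>x\<in>topspace X. \<exists>U V. openin X U \<and> x \<in> U \<and> openin (half_space n) V \<and>
        subtopology X U homeomorphic_space subtopology (half_space n) V)"

definition manifold_interior :: "nat \<Rightarrow> 'a topology \<Rightarrow> 'a set" where
  "manifold_interior n X =
     {x \<in> topspace X. \<exists>U V. openin X U \<and> x \<in> U \<and> openin (Euclidean_space n) V \<and>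
        subtopology X U homeomorphic_space subtopology (Euclidean_space n) V}"

text \<open>Orientability (integral singular homology): a locally consistent choice of
  generators of the local homology groups H_n(X, X - x) at the interior points.\<close>
definition orientable_manifold :: "nat \<Rightarrow> 'a topology \<Rightarrow> bool" where
  "orientable_manifold n X \<longleftrightarrow>
     (\<exists>or. (\<forall>x\<in>manifold_interior n X.
              or x \<in> carrier (relative_homology_group (int n) X (topspace X - {x})) \<and>
              generate (relative_homology_group (int n) X (topspace X - {x})) {or x}
                = carrier (relative_homology_group (int n) X (topspace X - {x}))) \<and>
           (\<forall>x\<in>manifold_interior n X. \<exists>K. compactin X K \<and> K \<subseteq> manifold_interior n X \<and>
              x \<in> X interior_of K \<and>
              (\<exists>c \<in> carrier (relative_homology_group (int n) X (topspace X - K)).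
                 \<forall>y\<in>K. hom_induced (int n) X (topspace X - K) X (topspace X - {y}) id c = or y)))"

definition covering_action :: "('g, 'm) monoid_scheme \<Rightarrow> 'b topology \<Rightarrow> ('g \<Rightarrow> 'b \<Rightarrow> 'b) \<Rightarrow> bool" where
  "covering_action G X \<phi> \<longleftrightarrow>
     group_action G (topspace X) \<phi> \<and>
     (\<forall>x\<in>topspace X. \<exists>U. openin X U \<and> x \<in> U \<and>
        (\<forall>g\<in>carrier G. g \<noteq> \<one>\<^bsub>G\<^esub> \<longrightarrow> \<phi> g ` U \<inter> U = {}))"

end

theory Submission
  imports Defs "HOL-Algebra.Multiplicative_Group"
begin

(* The isometry gamma acts freely and properly discontinuously, so the orbits of the cyclic group
   it generates are uniformly discrete near each point, and this group acts properly: only finitely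
   many translates gamma^k S_0 meet a given compact set. In particular gamma^k S_0 misses S_0 for
   all large |k|.

   The image h S_0 of the level under a homeomorphism h of S x R separates the two ends of the
   cylinder. Comparing ends shows that for f = gamma^K with K one of +-N, +-2N the closed half
   W = S x ]-oo, t_0] is mapped by f^-1 into the open half below S_0. The sets f^k W then increase
   with k, and by properness they exhaust S x R and have no common point, so every point lies in
   f^k (f W - W) for some k. The region f W - W lies in the compact set f W \<inter> S x [t_0, oo[,
   whose image under the orbit map is therefore all of M/G. *)

lemma int_threshold:
  fixes P :: "int \<Rightarrow> bool"
  assumes "i \<le> j" and "\<not> P i" and "P j"
  shows "\<exists>k. P k \<and> \<not> P (k - 1)"
  using assms
proof (induction j rule: int_ge_induct)
  case base
  then show ?case by simp
next
  case (step j)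
  then show ?case by (cases "P j") auto
qed

lemma finite_int_set_bounded:
  fixes A :: "int set"
  assumes "finite A"
  shows "\<exists>B. \<forall>k. B < \<bar>k\<bar> \<longrightarrow> k \<notin> A"
proof -
  obtain B where B: "abs ` A \<subseteq> {..B}" using assms finite_int_iff_bounded_le by blast
  show ?thesis
  proof (intro exI allI impI)
    fix k assume "B < \<bar>k\<bar>"
    then show "k \<notin> A" using B by force
  qed
qed

lemma finite_subsingleton:
  assumes "\<And>x y. P x \<Longrightarrow> P y \<Longrightarrow> x = y"
  shows "finite {x. P x}"
proof (cases "\<exists>x. P x")
  case True
  then obtain x where "P x" by blast
  then have "{x. P x} \<subseteq> {x}" using assms by blast
  then show ?thesis using finite_subset by blast
qed simp

lemma compact_space_quotient_of_transversal:
  assumes "quotient_map X Y f" and "compactin X D"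
    and "\<And>p. p \<in> topspace X \<Longrightarrow> \<exists>q\<in>D. f p = f q"
  shows "compact_space Y"
proof -
  have "f ` D = topspace Y"
    using assms compactin_subset_topspace quotient_imp_surjective_map[OF assms(1)] by fastforce
  then show ?thesis
    using image_compactin[OF assms(2) quotient_imp_continuous_map[OF assms(1)]]
    by (simp add: compact_space_def)
qed

lemma homeomorphic_maps_image_compl:
  assumes "homeomorphic_maps X X f g" and "A \<subseteq> topspace X" and "B \<subseteq> topspace X"
    and "topspace X - A \<subseteq> f ` B"
  shows "topspace X - B \<subseteq> g ` A"
proof
  fix y assume y: "y \<in> topspace X - B"
  have inv: "\<And>x. x \<in> topspace X \<Longrightarrow> f x \<in> topspace X \<and> g (f x) = x"
    using assms(1) by (auto simp: homeomorphic_maps_def continuous_map_def)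
  have "f y \<notin> f ` B"
    using y inv assms(3) by (metis DiffE image_iff subsetD)
  then have "f y \<in> A" using y inv assms(4) by blast
  then show "y \<in> g ` A" using y inv by (metis DiffD1 image_eqI)
qed

lemma homeomorphic_map_image_disjoint:
  assumes "homeomorphic_map X Y f" and "A \<subseteq> topspace X" and "B \<subseteq> topspace X" and "A \<inter> B = {}"
  shows "f ` A \<inter> f ` B = {}"
  using inj_on_image_Int[OF homeomorphic_imp_injective_map[OF assms(1)] assms(2,3)] assms(4) by simp

lemma (in group_action) orbit_action_eq:
  assumes "g \<in> carrier G" and "x \<in> E"
  shows "orbit G \<phi> (\<phi> g x) = orbit G \<phi> x"
proof -
  have gx: "\<phi> g x \<in> E" using element_image assms by blast
  have orbit_E: "orbit G \<phi> y \<subseteq> E" if "y \<in> E" for y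
    using element_image that by (auto simp: orbit_def)
  have "\<phi> g x \<in> orbit G \<phi> x" using assms(1) by (auto simp: orbit_def)
  moreover from this have "x \<in> orbit G \<phi> (\<phi> g x)" using orbit_sym assms(2) gx by blast
  ultimately show ?thesis
    using orbit_trans assms(2) gx orbit_E by blast
qed

lemma (in Metric_space) covering_action_separates_orbit:
  assumes "covering_action G mtopology \<phi>" and "x \<in> M"
  shows "\<exists>r>0. \<forall>g\<in>carrier G. g \<noteq> \<one>\<^bsub>G\<^esub> \<longrightarrow> r \<le> d (\<phi> g x) x"
proof -
  obtain U where U: "openin mtopology U" "x \<in> U"
    and disj: "\<And>g. g \<in> carrier G \<Longrightarrow> g \<noteq> \<one>\<^bsub>G\<^esub> \<Longrightarrow> \<phi> g ` U \<inter> U = {}"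
    using assms unfolding covering_action_def by auto
  obtain r where "r > 0" and r: "mball x r \<subseteq> U"
    using U openin_mtopology by blast
  have "r \<le> d (\<phi> g x) x" if "g \<in> carrier G" "g \<noteq> \<one>\<^bsub>G\<^esub>" for g
  proof -
    have "\<phi> g x \<in> M"
      using assms that group_action.element_image unfolding covering_action_def by fastforce
    moreover have "\<phi> g x \<notin> U" using disj[OF that] U(2) by blast
    ultimately show ?thesis using r assms(2) commute by fastforce
  qed
  then show ?thesis using \<open>r > 0\<close> by blast
qed

lemma (in Metric_space) covering_action_separates_cyclic_orbit:
  assumes "group G" and act: "covering_action G mtopology \<phi>" and \<gamma>: "\<gamma> \<in> carrier G"
    and "\<forall>n::nat. n > 0 \<longrightarrow> \<gamma> [^]\<^bsub>G\<^esub> n \<noteq> \<one>\<^bsub>G\<^esub>" and x: "x \<in> M"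
  shows "\<exists>r>0. \<forall>k::int. k \<noteq> 0 \<longrightarrow> r \<le> d (\<phi> (\<gamma> [^]\<^bsub>G\<^esub> k) x) x"
proof -
  interpret group G by fact
  have "group.ord G \<gamma> = 0" using assms(4) \<gamma> by (simp add: ord_eq_0)
  then have "\<gamma> [^]\<^bsub>G\<^esub> k \<noteq> \<one>\<^bsub>G\<^esub>" if "k \<noteq> 0" for k :: int
    using \<gamma> that by (simp add: int_pow_eq_id)
  moreover obtain r where "r > 0" and "\<forall>g\<in>carrier G. g \<noteq> \<one>\<^bsub>G\<^esub> \<longrightarrow> r \<le> d (\<phi> g x) x"
    using covering_action_separates_orbit[OF act x] by blast
  ultimately show ?thesis using \<gamma> by (metis int_pow_closed)
qed

locale isometric_int_action = Metric_space +
  fixes H :: "int \<Rightarrow> 'a \<Rightarrow> 'a"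
  assumes H_in: "x \<in> M \<Longrightarrow> H k x \<in> M"
    and H_isometric: "x \<in> M \<Longrightarrow> y \<in> M \<Longrightarrow> d (H k x) (H k y) = d x y"
    and H_add: "x \<in> M \<Longrightarrow> H (j + k) x = H j (H k x)"
begin

lemma H_zero: "x \<in> M \<Longrightarrow> H 0 x = x"
  using H_add[of x 0 0] H_isometric[of "H 0 x" x 0] H_in[of x 0] by simp

lemma homeomorphic_maps_H: "homeomorphic_maps mtopology mtopology (H k) (H (-k))"
proof -
  have cont: "continuous_map mtopology mtopology (H j)" for j
    using H_in H_isometric by (auto simp: metric_continuous_map[OF Metric_space_axioms])
  have inv: "H j (H (-j) x) = x" if "x \<in> M" for j x
    using H_add[OF that, of j "-j"] H_zero[OF that] by simp
  have "H (-k) (H k x) = x" if "x \<in> M" for x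
    using inv[OF that, of "-k"] by simp
  then show ?thesis
    by (simp add: homeomorphic_maps_def cont inv)
qed

lemma dist_translates: "x \<in> M \<Longrightarrow> d (H k x) (H j x) = d (H (k - j) x) x"
  using H_add[of x j "k - j"] H_isometric[of "H (k - j) x" x j] H_in by simp

lemma translate_meeting_ball_unique:
  assumes x: "x \<in> M" and sep: "\<And>k. k \<noteq> 0 \<Longrightarrow> r \<le> d (H k x) x"
    and k: "s \<in> mball x (r/4)" "H k s \<in> mball y (r/4)"
    and j: "s' \<in> mball x (r/4)" "H j s' \<in> mball y (r/4)"
  shows "k = j"
proof (rule ccontr)
  assume "k \<noteq> j"
  have s: "s \<in> M" "s' \<in> M" "y \<in> M" using k j by auto
  have "r \<le> d (H k x) (H j x)"
    using sep[of "k - j"] dist_translates[OF x] \<open>k \<noteq> j\<close> by simp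
  also have "\<dots> \<le> d (H k x) (H k s) + d (H k s) y + d y (H j s') + d (H j s') (H j x)"
    using triangle[OF H_in[OF x, of k] H_in[OF s(1), of k] H_in[OF x, of j]]
      triangle[OF H_in[OF s(1), of k] s(3) H_in[OF x, of j]]
      triangle[OF s(3) H_in[OF s(2), of j] H_in[OF x, of j]] by linarith
  also have "\<dots> = d x s + d (H k s) y + d y (H j s') + d s' x"
    using s x by (simp add: H_isometric)
  also have "\<dots> < r"
    using k j by (simp add: commute)
  finally show False by simp
qed

lemma finite_translates_meeting_ball:
  assumes x: "x \<in> M" and "r > 0" and sep: "\<And>k. k \<noteq> 0 \<Longrightarrow> r \<le> d (H k x) x"
    and K: "compactin mtopology K"
  shows "finite {k. H k ` mball x (r/4) \<inter> K \<noteq> {}}"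
proof -
  obtain Y where "finite Y" and cover: "K \<subseteq> (\<Union>y\<in>Y. mball y (r/4))"
    using compactin_imp_mtotally_bounded[OF K] \<open>r > 0\<close> unfolding mtotally_bounded_def
    by (metis divide_pos_pos zero_less_numeral)
  have "finite {k. H k ` mball x (r/4) \<inter> mball y (r/4) \<noteq> {}}" for y
    by (rule finite_subsingleton) (use translate_meeting_ball_unique[OF x sep] in blast)
  then have "finite (\<Union>y\<in>Y. {k. H k ` mball x (r/4) \<inter> mball y (r/4) \<noteq> {}})"
    using \<open>finite Y\<close> by blast
  moreover have "{k. H k ` mball x (r/4) \<inter> K \<noteq> {}}
      \<subseteq> (\<Union>y\<in>Y. {k. H k ` mball x (r/4) \<inter> mball y (r/4) \<noteq> {}})"
    using cover by blast
  ultimately show ?thesis by (rule finite_subset[rotated])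
qed

text \<open>The separation radius of an orbit depends on the point, so L is covered by finitely many
  balls with radii adapted to their centres.\<close>
lemma finite_translates_meeting:
  assumes sep: "\<And>x. x \<in> M \<Longrightarrow> \<exists>r>0. \<forall>k. k \<noteq> 0 \<longrightarrow> r \<le> d (H k x) x"
    and L: "compactin mtopology L" and K: "compactin mtopology K"
  shows "finite {k. H k ` L \<inter> K \<noteq> {}}"
proof -
  have "\<forall>x\<in>M. \<exists>r. r > 0 \<and> (\<forall>k. k \<noteq> 0 \<longrightarrow> r \<le> d (H k x) x)"
    using sep by blast
  then obtain r where r: "\<forall>x\<in>M. r x > 0 \<and> (\<forall>k. k \<noteq> 0 \<longrightarrow> r x \<le> d (H k x) x)"
    by (metis bchoice)
  have "L \<subseteq> M" using L compactin_subset_topspace by fastforce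
  have "L \<subseteq> \<Union>((\<lambda>x. mball x (r x / 4)) ` L)"
  proof
    fix x assume "x \<in> L"
    then have "x \<in> mball x (r x / 4)" using \<open>L \<subseteq> M\<close> r by auto
    then show "x \<in> \<Union>((\<lambda>x. mball x (r x / 4)) ` L)" using \<open>x \<in> L\<close> by blast
  qed
  then have "\<exists>\<F>. finite \<F> \<and> \<F> \<subseteq> (\<lambda>x. mball x (r x / 4)) ` L \<and> L \<subseteq> \<Union>\<F>"
    by (rule compactinD[OF L, rotated]) auto
  then obtain X where "X \<subseteq> L" "finite X" and cover: "L \<subseteq> (\<Union>x\<in>X. mball x (r x / 4))"
    using finite_subset_image by (metis (no_types, lifting))
  have "finite {k. H k ` mball x (r x / 4) \<inter> K \<noteq> {}}" if "x \<in> X" for x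
    using that \<open>X \<subseteq> L\<close> \<open>L \<subseteq> M\<close> r by (intro finite_translates_meeting_ball K) auto
  then have "finite (\<Union>x\<in>X. {k. H k ` mball x (r x / 4) \<inter> K \<noteq> {}})"
    using \<open>finite X\<close> by blast
  moreover have "{k. H k ` L \<inter> K \<noteq> {}} \<subseteq> (\<Union>x\<in>X. {k. H k ` mball x (r x / 4) \<inter> K \<noteq> {}})"
    using cover by blast
  ultimately show ?thesis by (rule finite_subset[rotated])
qed

end

lemma isometric_int_action_int_pow:
  assumes "group_action G M \<phi>" and "Metric_space M d" and "\<gamma> \<in> carrier G"
    and "\<forall>g\<in>carrier G. \<forall>x\<in>M. \<forall>y\<in>M. d (\<phi> g x) (\<phi> g y) = d x y"
  shows "isometric_int_action M d (\<lambda>k. \<phi> (\<gamma> [^]\<^bsub>G\<^esub> (k::int)))"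
proof -
  interpret group_action G M \<phi> by fact
  interpret group G using group_hom group_hom.axioms(1) by blast
  show ?thesis
  proof (intro isometric_int_action.intro isometric_int_action_axioms.intro)
    fix j k :: int and x y assume "x \<in> M"
    then show "\<phi> (\<gamma> [^]\<^bsub>G\<^esub> k) x \<in> M"
      using assms(3) element_image int_pow_closed by blast
    show "\<phi> (\<gamma> [^]\<^bsub>G\<^esub> (j + k)) x = \<phi> (\<gamma> [^]\<^bsub>G\<^esub> j) (\<phi> (\<gamma> [^]\<^bsub>G\<^esub> k) x)"
      using assms(3) \<open>x \<in> M\<close> by (simp add: int_pow_mult composition_rule)
    assume "y \<in> M"
    then show "d (\<phi> (\<gamma> [^]\<^bsub>G\<^esub> k) x) (\<phi> (\<gamma> [^]\<^bsub>G\<^esub> k) y) = d x y"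
      using assms(3,4) \<open>x \<in> M\<close> by simp
  qed fact
qed

locale cylinder =
  fixes S :: "'a topology"
  assumes compact_S: "compact_space S" and connected_S: "connected_space S"
    and nonempty_S: "topspace S \<noteq> {}"
begin

abbreviation C :: "('a \<times> real) topology" where "C \<equiv> prod_topology S euclideanreal"
abbreviation level :: "real \<Rightarrow> ('a \<times> real) set" where "level a \<equiv> topspace S \<times> {a}"
abbreviation lower_half :: "real \<Rightarrow> ('a \<times> real) set" where "lower_half a \<equiv> topspace S \<times> {..<a}"
abbreviation upper_half :: "real \<Rightarrow> ('a \<times> real) set" where "upper_half a \<equiv> topspace S \<times> {a<..}"

lemma band_subset_topspace: "topspace S \<times> I \<subseteq> topspace C"
  by (simp add: times_subset_iff)

lemma connectedin_band: "connected I \<Longrightarrow> connectedin C (topspace S \<times> I)"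
  using connected_S by (simp add: connectedin_Times connectedin_topspace)

lemma compactin_band: "compactin C (topspace S \<times> {c..d})"
  using compact_S by (simp add: compactin_Times compact_space_def)

lemma compactin_imp_in_band:
  assumes "compactin C K"
  obtains c d where "K \<subseteq> topspace S \<times> {c..d}"
proof -
  have "compact (snd ` K)"
    using image_compactin[OF assms continuous_map_snd] by simp
  then obtain B where "\<forall>t\<in>snd ` K. \<bar>t\<bar> \<le> B"
    using compact_imp_bounded bounded_real by metis
  moreover have "K \<subseteq> topspace S \<times> UNIV"
    using compactin_subset_topspace[OF assms] by simp
  ultimately have "K \<subseteq> topspace S \<times> {-B..B}"
    by (force simp: abs_le_iff)
  then show thesis by (rule that)
qed

lemma image_level_in_band:
  assumes "homeomorphic_map C C h"
  obtains c d where "h ` level a \<subseteq> topspace S \<times> {c..d}"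
  using compactin_imp_in_band image_compactin[OF compactin_band homeomorphic_imp_continuous_map[OF assms]]
  by (metis atLeastAtMost_singleton)

lemma halves_not_in_band:
  shows "\<not> upper_half a \<subseteq> topspace S \<times> {c..d}" and "\<not> lower_half a \<subseteq> topspace S \<times> {c..d}"
proof -
  obtain x where "x \<in> topspace S" using nonempty_S by blast
  then have "(x, max a d + 1) \<in> upper_half a" and "(x, min a c - 1) \<in> lower_half a" by auto
  then show "\<not> upper_half a \<subseteq> topspace S \<times> {c..d}" and "\<not> lower_half a \<subseteq> topspace S \<times> {c..d}"
    by (auto simp: subset_iff)
qed

lemma image_half_not_in_band:
  assumes "homeomorphic_map C C h"
  shows "\<not> h ` upper_half a \<subseteq> topspace S \<times> {c..d}" and "\<not> h ` lower_half a \<subseteq> topspace S \<times> {c..d}"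
proof -
  obtain g where "homeomorphic_maps C C h g" using assms homeomorphic_map_maps by blast
  then have g: "continuous_map C C g" and g_h: "\<And>x. x \<in> topspace C \<Longrightarrow> g (h x) = x"
    unfolding homeomorphic_maps_def by blast+
  have "compactin C (g ` (topspace S \<times> {c..d}))" by (rule image_compactin[OF compactin_band g])
  then obtain c' d' where band: "g ` (topspace S \<times> {c..d}) \<subseteq> topspace S \<times> {c'..d'}"
    by (rule compactin_imp_in_band)
  have confined: "X \<subseteq> topspace S \<times> {c'..d'}" if "X \<subseteq> topspace C" "h ` X \<subseteq> topspace S \<times> {c..d}" for X
  proof
    fix x assume "x \<in> X"
    then have "x = g (h x)" and "h x \<in> topspace S \<times> {c..d}" using that g_h by auto
    then show "x \<in> topspace S \<times> {c'..d'}" using band by (metis image_subset_iff)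
  qed
  show "\<not> h ` upper_half a \<subseteq> topspace S \<times> {c..d}"
  proof
    assume "h ` upper_half a \<subseteq> topspace S \<times> {c..d}"
    then have "upper_half a \<subseteq> topspace S \<times> {c'..d'}" by (intro confined) auto
    with halves_not_in_band(1) show False by blast
  qed
  show "\<not> h ` lower_half a \<subseteq> topspace S \<times> {c..d}"
  proof
    assume "h ` lower_half a \<subseteq> topspace S \<times> {c..d}"
    then have "lower_half a \<subseteq> topspace S \<times> {c'..d'}" by (intro confined) auto
    with halves_not_in_band(2) show False by blast
  qed
qed

lemma image_halves_disjoint:
  assumes "homeomorphic_map C C h"
  shows "h ` lower_half a \<inter> h ` upper_half a = {}"
  by (rule homeomorphic_map_image_disjoint[OF assms]) auto

lemma image_level_separates:
  assumes h: "homeomorphic_map C C h" and K: "connectedin C K" and disj: "K \<inter> h ` level a = {}"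
  shows "K \<subseteq> h ` lower_half a \<or> K \<subseteq> h ` upper_half a"
proof (rule connectedin_subset_separated_union[OF K])
  have "openin C (h ` lower_half a)" and "openin C (h ` upper_half a)"
    by (subst homeomorphic_map_openness[OF h]; auto simp: openin_prod_Times_iff)+
  moreover note image_halves_disjoint[OF h]
  ultimately show "separatedin C (h ` lower_half a) (h ` upper_half a)"
    by (simp add: separatedin_open_sets disjnt_def)
  have "lower_half a \<union> level a \<union> upper_half a = topspace C" by auto
  then have "topspace C = h ` (lower_half a \<union> level a \<union> upper_half a)"
    using homeomorphic_imp_surjective_map[OF h] by simp
  then show "K \<subseteq> h ` lower_half a \<union> h ` upper_half a"
    using connectedin_subset_topspace[OF K] disj by blast
qed

lemma connectedin_image_lower_half:
  assumes h: "homeomorphic_map C C h" and "connectedin C K" and "K \<inter> h ` level a = {}"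
    and "p \<in> K" and "p \<in> h ` lower_half a"
  shows "K \<subseteq> h ` lower_half a"
  using image_level_separates[OF assms(1-3)] image_halves_disjoint[OF h] assms(4,5) by blast

lemma connectedin_image_upper_half:
  assumes h: "homeomorphic_map C C h" and "connectedin C K" and "K \<inter> h ` level a = {}"
    and "p \<in> K" and "p \<in> h ` upper_half a"
  shows "K \<subseteq> h ` upper_half a"
  using image_level_separates[OF assms(1-3)] image_halves_disjoint[OF h] assms(4,5) by blast

text \<open>The two ends of the cylinder lie on opposite sides of the image of a level: otherwise the
  other side would be the image of a half-cylinder confined to a compact band.\<close>
lemma image_level_ends:
  assumes h: "homeomorphic_map C C h" and band: "h ` level a \<subseteq> topspace S \<times> {c..d}"
  shows "lower_half c \<subseteq> h ` lower_half a \<and> upper_half d \<subseteq> h ` upper_half a \<or>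
         lower_half c \<subseteq> h ` upper_half a \<and> upper_half d \<subseteq> h ` lower_half a"
proof -
  have "lower_half c \<inter> h ` level a = {}" and "upper_half d \<inter> h ` level a = {}"
    using band by auto
  then have "lower_half c \<subseteq> h ` lower_half a \<or> lower_half c \<subseteq> h ` upper_half a"
    and "upper_half d \<subseteq> h ` lower_half a \<or> upper_half d \<subseteq> h ` upper_half a"
    by (simp_all add: image_level_separates[OF h] connectedin_band)
  moreover have False
    if "lower_half c \<subseteq> h ` X" "upper_half d \<subseteq> h ` X" "h ` X \<inter> h ` Y = {}" "Y \<subseteq> topspace C"
      and "\<not> h ` Y \<subseteq> topspace S \<times> {c..d}" for X Y
  proof -
    have "h ` Y \<subseteq> topspace C"
      using \<open>Y \<subseteq> topspace C\<close> homeomorphic_imp_surjective_map[OF h] by blast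
    have "h ` Y \<subseteq> topspace S \<times> {c..d}"
    proof
      fix y assume "y \<in> h ` Y"
      then have "y \<in> topspace C" "y \<notin> lower_half c" "y \<notin> upper_half d"
        using that \<open>h ` Y \<subseteq> topspace C\<close> by blast+
      then show "y \<in> topspace S \<times> {c..d}" by (cases y) auto
    qed
    then show False using that(5) by blast
  qed
  moreover note image_halves_disjoint[OF h]
  moreover have "lower_half a \<subseteq> topspace C" and "upper_half a \<subseteq> topspace C" by auto
  ultimately show ?thesis
    using image_half_not_in_band[OF h] by (metis inf_commute)
qed

lemma bottom_keeping_imp_raising:
  assumes hg: "homeomorphic_maps C C h g" and disj: "h ` level a \<inter> level a = {}"
    and bottom: "lower_half c \<subseteq> h ` lower_half a"
  shows "topspace S \<times> {..a} \<subseteq> h ` lower_half a \<or> topspace S \<times> {..a} \<subseteq> g ` lower_half a"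
proof -
  have h: "homeomorphic_map C C h" using hg homeomorphic_maps_imp_map by blast
  obtain x where x: "x \<in> topspace S" using nonempty_S by blast
  have "connectedin C (h ` level a)"
    using connectedin_continuous_map_image[OF homeomorphic_imp_continuous_map[OF h]]
      connectedin_band[of "{a}"] by simp
  then have "h ` level a \<subseteq> lower_half a \<or> h ` level a \<subseteq> upper_half a"
    using image_level_separates[of id "h ` level a" a] disj by (simp add: Int_commute)
  then show ?thesis
  proof
    assume "h ` level a \<subseteq> upper_half a"
    then have "topspace S \<times> {..a} \<inter> h ` level a = {}" by auto
    moreover have "(x, min a c - 1) \<in> topspace S \<times> {..a}" using x by auto
    moreover have "(x, min a c - 1) \<in> h ` lower_half a" using bottom x by auto
    ultimately have "topspace S \<times> {..a} \<subseteq> h ` lower_half a"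
      by (rule connectedin_image_lower_half[OF h connectedin_band[OF connected_Iic]])
    then show ?thesis ..
  next
    assume "h ` level a \<subseteq> lower_half a"
    then have "topspace S \<times> {a..} \<inter> h ` level a = {}" by auto
    obtain c' d' where band: "h ` level a \<subseteq> topspace S \<times> {c'..d'}"
      using image_level_in_band[OF h] .
    have "(x, min c c' - 1) \<in> lower_half c'" and "(x, min c c' - 1) \<in> h ` lower_half a"
      using bottom x by auto
    then have "\<not> lower_half c' \<subseteq> h ` upper_half a"
      using image_halves_disjoint[OF h, of a] by blast
    then have "upper_half d' \<subseteq> h ` upper_half a"
      using image_level_ends[OF h band] by blast
    then have "(x, max a d' + 1) \<in> h ` upper_half a" using x by auto
    moreover have "(x, max a d' + 1) \<in> topspace S \<times> {a..}" using x by auto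
    ultimately have "topspace S \<times> {a..} \<subseteq> h ` upper_half a"
      using connectedin_image_upper_half[OF h connectedin_band[OF connected_Ici]]
        \<open>topspace S \<times> {a..} \<inter> h ` level a = {}\<close> by blast
    moreover have "topspace C - lower_half a = topspace S \<times> {a..}" by auto
    ultimately have "topspace C - lower_half a \<subseteq> h ` upper_half a" by simp
    then have "topspace C - upper_half a \<subseteq> g ` lower_half a"
      using homeomorphic_maps_image_compl[OF hg, of "lower_half a" "upper_half a"] by auto
    moreover have "topspace S \<times> {..a} \<subseteq> topspace C - upper_half a" by auto
    ultimately show ?thesis by blast
  qed
qed

lemma swapping_square_keeps_bottom:
  assumes h: "homeomorphic_map C C h" and swap: "upper_half d \<subseteq> h ` lower_half a"
  obtains c' where "lower_half c' \<subseteq> h ` h ` lower_half a"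
proof -
  define b where "b = max a d + 1"
  obtain c' d' where band: "h ` level b \<subseteq> topspace S \<times> {c'..d'}"
    using image_level_in_band[OF h] .
  obtain x where x: "x \<in> topspace S" using nonempty_S by blast
  have "\<not> upper_half d' \<subseteq> h ` upper_half b"
  proof
    assume "upper_half d' \<subseteq> h ` upper_half b"
    also have "\<dots> \<subseteq> h ` upper_half a" by (rule image_mono) (auto simp: b_def)
    finally have "(x, max d d' + 1) \<in> h ` upper_half a" using x by auto
    moreover have "(x, max d d' + 1) \<in> h ` lower_half a" using swap x by auto
    ultimately show False using image_halves_disjoint[OF h] by blast
  qed
  then have "lower_half c' \<subseteq> h ` upper_half b"
    using image_level_ends[OF h band] by blast
  also have "\<dots> \<subseteq> h ` upper_half d" by (rule image_mono) (auto simp: b_def)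
  also have "\<dots> \<subseteq> h ` h ` lower_half a" using swap by (rule image_mono)
  finally show thesis by (rule that)
qed

end

locale cylinder_Z_action = cylinder +
  fixes F :: "int \<Rightarrow> 'a \<times> real \<Rightarrow> 'a \<times> real"
  assumes homeomorphic_maps_F: "homeomorphic_maps C C (F k) (F (-k))"
    and F_add: "x \<in> topspace C \<Longrightarrow> F (j + k) x = F j (F k x)"
begin

lemma homeomorphic_map_F: "homeomorphic_map C C (F k)"
  using homeomorphic_maps_F homeomorphic_maps_imp_map by blast

lemma F_zero:
  assumes "x \<in> topspace C" shows "F 0 x = x"
proof -
  have "F (- 0) (F 0 x) = x"
    using homeomorphic_maps_F[of 0] assms unfolding homeomorphic_maps_def by blast
  moreover have "F 0 (F 0 x) = F 0 x" using F_add[OF assms, of 0 0] by simp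
  ultimately show ?thesis by simp
qed

lemma image_F_zero:
  assumes "A \<subseteq> topspace C" shows "F 0 ` A = A"
proof -
  have "F 0 ` A = (\<lambda>x. x) ` A" by (rule image_cong[OF refl]) (use assms F_zero in blast)
  then show ?thesis by simp
qed

lemma image_F_add:
  assumes "A \<subseteq> topspace C" shows "F j ` F k ` A = F (j + k) ` A"
  unfolding image_image by (rule image_cong[OF refl]) (metis assms F_add subsetD)

lemma exists_raising_translate:
  assumes "F N ` level a \<inter> level a = {}" and "F (2 * N) ` level a \<inter> level a = {}"
  shows "\<exists>k\<in>{N, -N, 2 * N, -(2 * N)}. topspace S \<times> {..a} \<subseteq> F k ` lower_half a"
proof -
  obtain c d where band: "F N ` level a \<subseteq> topspace S \<times> {c..d}"
    using image_level_in_band[OF homeomorphic_map_F] .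
  from image_level_ends[OF homeomorphic_map_F band] show ?thesis
  proof
    assume "lower_half c \<subseteq> F N ` lower_half a \<and> upper_half d \<subseteq> F N ` upper_half a"
    from bottom_keeping_imp_raising[OF homeomorphic_maps_F assms(1) conjunct1[OF this]]
    show ?thesis by (meson insertCI)
  next
    assume ends: "lower_half c \<subseteq> F N ` upper_half a \<and> upper_half d \<subseteq> F N ` lower_half a"
    obtain c' where "lower_half c' \<subseteq> F N ` F N ` lower_half a"
      using swapping_square_keeps_bottom[OF homeomorphic_map_F conjunct2[OF ends]] .
    moreover have "F N ` F N ` lower_half a = F (2 * N) ` lower_half a"
      unfolding image_F_add[OF band_subset_topspace] by (simp only: mult_2)
    ultimately have "lower_half c' \<subseteq> F (2 * N) ` lower_half a" by simp
    from bottom_keeping_imp_raising[OF homeomorphic_maps_F assms(2) this]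
    show ?thesis by (meson insertCI)
  qed
qed

end

locale raising_cylinder_action = cylinder_Z_action +
  fixes a :: real
  assumes raising: "topspace S \<times> {..a} \<subseteq> F 1 ` lower_half a"
    and proper: "compactin C K \<Longrightarrow> finite {k. F k ` level a \<inter> K \<noteq> {}}"
begin

abbreviation shifted_lower :: "int \<Rightarrow> ('a \<times> real) set" where
  "shifted_lower k \<equiv> F k ` (topspace S \<times> {..a})"

lemma shifted_lower_step: "shifted_lower k \<subseteq> F (k + 1) ` lower_half a"
proof -
  have "shifted_lower k \<subseteq> F k ` F 1 ` lower_half a" using raising by (rule image_mono)
  also have "\<dots> = F (k + 1) ` lower_half a" by (rule image_F_add[OF band_subset_topspace])
  finally show ?thesis .
qed

lemma shifted_lower_mono: "j \<le> k \<Longrightarrow> shifted_lower j \<subseteq> shifted_lower k"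
proof (induction k rule: int_ge_induct)
  case (step k)
  have "F (k + 1) ` lower_half a \<subseteq> shifted_lower (k + 1)" by (rule image_mono) auto
  then show ?case using step.IH shifted_lower_step by blast
qed simp

lemma lower_half_in_shifted_lower:
  assumes "m \<ge> 1" shows "topspace S \<times> {..a} \<subseteq> F m ` lower_half a"
proof -
  have "topspace S \<times> {..a} = shifted_lower 0" by (rule image_F_zero[OF band_subset_topspace, symmetric])
  also have "\<dots> \<subseteq> shifted_lower (m - 1)" by (rule shifted_lower_mono) (use assms in simp)
  also have "\<dots> \<subseteq> F (m - 1 + 1) ` lower_half a" by (rule shifted_lower_step)
  finally show ?thesis by simp
qed

lemma translates_avoid:
  assumes "compactin C K"
  obtains m where "m \<ge> 1" and "F m ` level a \<inter> K = {}" and "F (-m) ` level a \<inter> K = {}"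
proof -
  obtain B where "\<And>k. B < \<bar>k\<bar> \<Longrightarrow> F k ` level a \<inter> K = {}"
    using finite_int_set_bounded[OF proper[OF assms]] by blast
  then show thesis using that[of "\<bar>B\<bar> + 1"] by simp
qed

lemma covered_by_shifted_lower:
  assumes p: "p \<in> topspace C"
  obtains k where "p \<in> shifted_lower k"
proof -
  define R where "R = max a (snd p)"
  obtain m where "m \<ge> 1" and avoid: "F m ` level a \<inter> topspace S \<times> {a..R} = {}"
    using translates_avoid[OF compactin_band] by metis
  obtain x where x: "x \<in> topspace S" using nonempty_S by blast
  have lower: "topspace S \<times> {..a} \<subseteq> F m ` lower_half a"
    using lower_half_in_shifted_lower[OF \<open>m \<ge> 1\<close>] .
  have "F m ` level a \<inter> F m ` lower_half a = {}"
    by (rule homeomorphic_map_image_disjoint[OF homeomorphic_map_F]) auto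
  have "topspace S \<times> {..R} \<subseteq> topspace S \<times> {..a} \<union> topspace S \<times> {a..R}" by auto
  also have "\<dots> \<subseteq> F m ` lower_half a \<union> topspace S \<times> {a..R}"
    using lower by (rule Un_mono[OF _ order_refl])
  finally have "F m ` level a \<inter> topspace S \<times> {..R}
      \<subseteq> F m ` level a \<inter> (F m ` lower_half a \<union> topspace S \<times> {a..R})"
    by (rule Int_mono[OF order_refl])
  also have "\<dots> = {}"
    by (simp only: Int_Un_distrib \<open>F m ` level a \<inter> F m ` lower_half a = {}\<close> avoid Un_empty)
  finally have "topspace S \<times> {..R} \<inter> F m ` level a = {}" by (metis inf_commute subset_empty)
  moreover have "(x, a - 1) \<in> topspace S \<times> {..R}" and "(x, a - 1) \<in> F m ` lower_half a"
    using x lower by (auto simp: R_def)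
  ultimately have "topspace S \<times> {..R} \<subseteq> F m ` lower_half a"
    by (rule connectedin_image_lower_half[OF homeomorphic_map_F connectedin_band[OF connected_Iic]])
  also have "\<dots> \<subseteq> shifted_lower m" by (rule image_mono) auto
  moreover have "p \<in> topspace S \<times> {..R}" using p by (cases p) (auto simp: R_def)
  ultimately show thesis using that by blast
qed

lemma escapes_shifted_lower:
  assumes p: "p \<in> topspace C"
  obtains k where "p \<notin> shifted_lower k"
proof -
  define R where "R = min a (snd p)"
  obtain m where "m \<ge> 1" and avoid: "F (-m) ` level a \<inter> topspace S \<times> {R..a} = {}"
    using translates_avoid[OF compactin_band] by metis
  obtain x where x: "x \<in> topspace S" using nonempty_S by blast
  have "F (-m) ` level a \<subseteq> shifted_lower (-m)" by (rule image_mono) auto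
  also have "\<dots> \<subseteq> shifted_lower (-1)" by (rule shifted_lower_mono) (use \<open>m \<ge> 1\<close> in simp)
  also have "\<dots> \<subseteq> F 0 ` lower_half a" using shifted_lower_step[of "-1"] by simp
  also have "\<dots> = lower_half a" by (rule image_F_zero[OF band_subset_topspace])
  finally have "F (-m) ` level a \<inter> upper_half a \<subseteq> lower_half a \<inter> upper_half a"
    by (rule Int_mono[OF _ order_refl])
  then have "F (-m) ` level a \<inter> upper_half a = {}" by auto
  have "F (-m) ` level a \<inter> topspace S \<times> {R..}
      \<subseteq> F (-m) ` level a \<inter> (topspace S \<times> {R..a} \<union> upper_half a)"
    by (rule Int_mono) auto
  also have "\<dots> = {}"
    by (simp only: Int_Un_distrib \<open>F (-m) ` level a \<inter> upper_half a = {}\<close> avoid Un_empty)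
  finally have away: "topspace S \<times> {R..} \<inter> F (-m) ` level a = {}"
    by (metis inf_commute subset_empty)
  have "topspace C - upper_half a = topspace S \<times> {..a}" by auto
  also have "\<dots> \<subseteq> F m ` lower_half a" by (rule lower_half_in_shifted_lower[OF \<open>m \<ge> 1\<close>])
  also have "\<dots> \<subseteq> F m ` (topspace S \<times> {..a})" by (rule image_mono) auto
  finally have "topspace C - topspace S \<times> {..a} \<subseteq> F (-m) ` upper_half a"
    by (intro homeomorphic_maps_image_compl[OF homeomorphic_maps_F] band_subset_topspace)
  moreover have "(x, a + 1) \<in> topspace C - topspace S \<times> {..a}" using x by auto
  ultimately have "(x, a + 1) \<in> F (-m) ` upper_half a" by blast
  then have "topspace S \<times> {R..} \<subseteq> F (-m) ` upper_half a"
    using connectedin_image_upper_half[OF homeomorphic_map_F connectedin_band[OF connected_Ici] away,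
        of "(x, a + 1)"] x by (simp add: R_def)
  moreover have "p \<in> topspace S \<times> {R..}" using p by (cases p) (auto simp: R_def)
  moreover have "shifted_lower (-m) \<inter> F (-m) ` upper_half a = {}"
    by (rule homeomorphic_map_image_disjoint[OF homeomorphic_map_F]) auto
  ultimately show thesis using that by blast
qed

lemma compactin_fundamental_domain: "compactin C (shifted_lower 1 \<inter> topspace S \<times> {a..})"
proof -
  obtain c d where band: "F 1 ` level a \<subseteq> topspace S \<times> {c..d}"
    using image_level_in_band[OF homeomorphic_map_F] .
  obtain x where x: "x \<in> topspace S" using nonempty_S by blast
  have "(x, min a c - 1) \<in> lower_half c" and "(x, min a c - 1) \<in> F 1 ` lower_half a"
    using raising x by auto
  then have "\<not> lower_half c \<subseteq> F 1 ` upper_half a"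
    using image_halves_disjoint[OF homeomorphic_map_F, of 1 a] by blast
  then have up: "upper_half d \<subseteq> F 1 ` upper_half a"
    using image_level_ends[OF homeomorphic_map_F band] by blast
  have disj: "shifted_lower 1 \<inter> F 1 ` upper_half a = {}"
    by (rule homeomorphic_map_image_disjoint[OF homeomorphic_map_F]) auto
  have "shifted_lower 1 \<inter> topspace S \<times> {a..} \<subseteq> topspace S \<times> {a..d}"
  proof
    fix y assume y: "y \<in> shifted_lower 1 \<inter> topspace S \<times> {a..}"
    then have "y \<notin> upper_half d" using up disj by (meson IntD1 disjoint_iff subsetD)
    then show "y \<in> topspace S \<times> {a..d}" using y by (cases y) auto
  qed
  moreover have "closedin C (shifted_lower 1)"
    by (simp add: homeomorphic_map_closedness[OF homeomorphic_map_F band_subset_topspace]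
        closedin_prod_Times_iff)
  then have "closedin C (shifted_lower 1 \<inter> topspace S \<times> {a..})"
    by (rule closedin_Int) (simp add: closedin_prod_Times_iff)
  ultimately show ?thesis by (rule closed_compactin[OF compactin_band])
qed

lemma fundamental_domain_meets_orbits:
  assumes p: "p \<in> topspace C"
  obtains k q where "q \<in> shifted_lower 1 \<inter> topspace S \<times> {a..}" and "p = F k q"
proof -
  obtain i where i: "p \<notin> shifted_lower i" using escapes_shifted_lower[OF p] .
  obtain j where j: "p \<in> shifted_lower j" using covered_by_shifted_lower[OF p] .
  have "i \<le> j"
  proof (rule ccontr)
    assume "\<not> i \<le> j"
    then have "shifted_lower j \<subseteq> shifted_lower i" by (intro shifted_lower_mono) simp
    with i j show False by (meson subsetD)
  qed
  then obtain k where "p \<in> shifted_lower k" and out: "p \<notin> shifted_lower (k - 1)"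
    using int_threshold[of i j "\<lambda>k. p \<in> shifted_lower k"] i j by blast
  then obtain y where y: "y \<in> topspace S \<times> {..a}" and "p = F k y" by blast
  have yC: "y \<in> topspace C" using subsetD[OF band_subset_topspace y] .
  have p_eq: "p = F (k - 1) (F 1 y)" using F_add[OF yC, of "k - 1" 1] \<open>p = F k y\<close> by simp
  have "F 1 y \<notin> topspace S \<times> {..a}"
  proof
    assume "F 1 y \<in> topspace S \<times> {..a}"
    then have "F (k - 1) (F 1 y) \<in> shifted_lower (k - 1)" by (rule imageI)
    with out p_eq show False by simp
  qed
  moreover have "F 1 y \<in> topspace C"
    using homeomorphic_imp_surjective_map[OF homeomorphic_map_F, of 1] yC by (metis imageI)
  ultimately have "F 1 y \<in> topspace S \<times> {a..}" by (cases "F 1 y") auto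
  moreover have "F 1 y \<in> shifted_lower 1" using y by (rule imageI)
  ultimately show thesis by (intro that[OF IntI p_eq])
qed

end

lemma (in cylinder_Z_action) compact_space_quotient:
  assumes proper: "\<And>K. compactin C K \<Longrightarrow> finite {k. F k ` level a \<inter> K \<noteq> {}}"
    and quot: "quotient_map C Q f" and invariant: "\<And>k x. x \<in> topspace C \<Longrightarrow> f (F k x) = f x"
  shows "compact_space Q"
proof -
  have "compactin C (level a)" using compactin_band[of a a] by simp
  then obtain B where B: "\<And>k. B < \<bar>k\<bar> \<Longrightarrow> F k ` level a \<inter> level a = {}"
    using finite_int_set_bounded[OF proper[OF \<open>compactin C (level a)\<close>]] by auto
  define N where "N = \<bar>B\<bar> + 1"
  have N: "B < \<bar>N\<bar>" "B < \<bar>2 * N\<bar>" by (simp_all add: N_def)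
  obtain K0 where K0: "K0 \<in> {N, -N, 2 * N, -(2 * N)}"
    and raising: "topspace S \<times> {..a} \<subseteq> F K0 ` lower_half a"
    using exists_raising_translate[OF B[OF N(1)] B[OF N(2)]] by (rule bexE)
  have "N > 0" by (simp add: N_def)
  then have "K0 \<noteq> 0" using K0 by auto
  interpret raising_cylinder_action S "\<lambda>k. F (K0 * k)" a
  proof
    show "homeomorphic_maps C C (F (K0 * k)) (F (K0 * - k))" for k
      using homeomorphic_maps_F[of "K0 * k"] by simp
    show "F (K0 * (j + k)) x = F (K0 * j) (F (K0 * k) x)" if "x \<in> topspace C" for j k x
      using F_add[OF that] by (simp add: distrib_left)
    show "topspace S \<times> {..a} \<subseteq> F (K0 * 1) ` lower_half a" using raising by simp
    show "finite {k. F (K0 * k) ` level a \<inter> K \<noteq> {}}" if "compactin C K" for K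
      using finite_vimageI[OF proper[OF that], of "\<lambda>k. K0 * k"] \<open>K0 \<noteq> 0\<close>
      by (simp add: inj_on_def vimage_def)
  qed
  show ?thesis
  proof (rule compact_space_quotient_of_transversal[OF quot compactin_fundamental_domain])
    fix p assume "p \<in> topspace C"
    then obtain k q where q: "q \<in> shifted_lower 1 \<inter> topspace S \<times> {a..}" and "p = F (K0 * k) q"
      by (rule fundamental_domain_meets_orbits)
    have "q \<in> topspace C"
      using subsetD[OF compactin_subset_topspace[OF compactin_fundamental_domain] q] .
    then show "\<exists>q\<in>shifted_lower 1 \<inter> topspace S \<times> {a..}. f p = f q"
      by (intro bexI[OF _ q]) (simp add: \<open>p = F (K0 * k) q\<close> invariant)
  qed
qed

theorem theorem2p1:
  fixes S :: "'a topology"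
    and G :: "('g, 'm) monoid_scheme"
    and \<phi> :: "'g \<Rightarrow> ('a \<times> real) \<Rightarrow> ('a \<times> real)"
    and d :: "('a \<times> real) \<Rightarrow> ('a \<times> real) \<Rightarrow> real"
    and \<gamma> :: 'g and t0 :: real and n0 :: nat
    and Q :: "('a \<times> real) set topology"
  assumes surf: "manifold_with_boundary 2 S"
    and cpt: "compact_space S"
    and conn: "connected_space S"
    and orient: "orientable_manifold 3 (prod_topology S euclideanreal)"
    and grp: "group G"
    and act: "covering_action G (prod_topology S euclideanreal) \<phi>"
    and metric: "Metric_space (topspace (prod_topology S euclideanreal)) d"
    and metric_top: "Metric_space.mtopology (topspace (prod_topology S euclideanreal)) d
                       = prod_topology S euclideanreal"
    and isom: "\<forall>g\<in>carrier G. \<forall>x\<in>topspace (prod_topology S euclideanreal).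
                 \<forall>y\<in>topspace (prod_topology S euclideanreal). d (\<phi> g x) (\<phi> g y) = d x y"
    and gam: "\<gamma> \<in> carrier G"
    and inf_order: "\<forall>n::nat. n > 0 \<longrightarrow> \<gamma> [^]\<^bsub>G\<^esub> n \<noteq> \<one>\<^bsub>G\<^esub>"
    and n0: "n0 > 0"
    and disj: "\<forall>n::nat. n > n0 \<longrightarrow>
                 \<phi> (\<gamma> [^]\<^bsub>G\<^esub> n) ` (topspace S \<times> {t0}) \<inter> (topspace S \<times> {t0}) = {}"
    and quot: "quotient_map (prod_topology S euclideanreal) Q (orbit G \<phi>)"
  shows "compact_space Q"
proof -
  let ?C = "prod_topology S euclideanreal"
  interpret Metric_space "topspace ?C" d by (rule metric)
  have ga: "group_action G (topspace ?C) \<phi>" using act by (simp add: covering_action_def)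
  show ?thesis
  proof (cases "topspace S = {}")
    case True
    then have "topspace Q = {}" using quotient_imp_surjective_map[OF quot] by simp
    then show ?thesis by (simp add: compact_space_def)
  next
    case False
    define H where "H k = \<phi> (\<gamma> [^]\<^bsub>G\<^esub> k)" for k :: int
    interpret isometric_int_action "topspace ?C" d H
      unfolding H_def using isometric_int_action_int_pow[OF ga metric gam] isom by blast
    interpret cylinder_Z_action S H
    proof
      show "homeomorphic_maps ?C ?C (H k) (H (-k))" for k
        using homeomorphic_maps_H metric_top by simp
    qed (use cpt conn False H_add in auto)
    have "\<exists>r>0. \<forall>k. k \<noteq> 0 \<longrightarrow> r \<le> d (H k x) x" if "x \<in> topspace ?C" for x
      unfolding H_def
      using covering_action_separates_cyclic_orbit[OF grp _ gam inf_order that] act metric_top by simp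
    then have "finite {k. H k ` level t0 \<inter> K \<noteq> {}}" if "compactin ?C K" for K
      using finite_translates_meeting[of "level t0" K] compactin_band[of t0 t0] that metric_top
      by simp
    moreover have "orbit G \<phi> (H k x) = orbit G \<phi> x" if "x \<in> topspace ?C" for k x
      unfolding H_def using group_action.orbit_action_eq[OF ga group.int_pow_closed[OF grp gam] that] .
    ultimately show ?thesis by (rule compact_space_quotient[OF _ quot])
  qed
qed

end
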